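(* p-Commutativity fails in general: there exist a language $L$, an $L$-algebra $\mathfrak A$ with universe $A$, and elements $a,b\in A$ such that $a:b\not\approx_{\mathfrak A}b:a$.
   Context: Let $L$ be a language of algebras: a set of function symbols, each with an arity in $\mathbb N$ (constants are 0-ary function symbols). Fix a countably infinite set $X$ of variables; $T_{L,X}$ is the set of $L$-terms over $X$, and $X(s)$ denotes the set of variables occurring in a term $s$. For an $L$-algebra $\mathfrak A$ with universe $A$, every term $s$ induces a function $s^{\mathfrak A}$, evaluated at assignments of elements of $A$ to variables. An arrow of $\mathfrak A$ is a pair $(a,b)\in A\times A$, written $a\to b$. The generalizations of an arrow $a\to b$ in $\mathfrak A$ are the pairs of arbitrary terms $s\to t$ with $s,t\in T_{L,X}$ such that there is an assignment $\sigma$ of elements of $A$ to the variables in $X(s)\cup X(t)$ with $s^{\mathfrak A}(\sigma)=a$ and $t^{\mathfrak A}(\sigma)=b$; their set is denoted $\uparrow_{\mathfrak A}(a\to b)$. For $L$-algebras $\mathfrak A,\mathfrak B$, an arrow $a\to b$ of $\mathfrak A$ and an arrow $c\to d$ of $\mathfrak B$, set $(a\to b)\uparrow_{(\mathfrak A,\mathfrak B)}(c\to d):=\uparrow_{\mathfrak A}(a\to b)\cap\uparrow_{\mathfrak B}(c\to d)$. A pair of terms $s\to t$ is trivial in $(\mathfrak A,\mathfrak B)$ if it belongs to $\uparrow_{\mathfrak A}(e)$ for every arrow $e$ of $\mathfrak A$ and to $\uparrow_{\mathfrak B}(e')$ for every arrow $e'$ of $\mathfrak B$. We write $a\to b\lesssim_{(\mathfrak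 A,\mathfrak B)}c\to d$ iff either (i) every element of $\uparrow_{\mathfrak A}(a\to b)\cup\uparrow_{\mathfrak B}(c\to d)$ is trivial in $(\mathfrak A,\mathfrak B)$, or (ii) $(a\to b)\uparrow_{(\mathfrak A,\mathfrak B)}(c\to d)$ contains an element not trivial in $(\mathfrak A,\mathfrak B)$ and, for every arrow $c'\to d'$ of $\mathfrak B$, the inclusion $(a\to b)\uparrow_{(\mathfrak A,\mathfrak B)}(c\to d)\subseteq(a\to b)\uparrow_{(\mathfrak A,\mathfrak B)}(c'\to d')$ implies equality of these two sets. Define $a\to b\approx_{(\mathfrak A,\mathfrak B)}c\to d$ iff $a\to b\lesssim_{(\mathfrak A,\mathfrak B)}c\to d$ and $c\to d\lesssim_{(\mathfrak B,\mathfrak A)}a\to b$. For $a,b\in A$ and $c,d\in B$, the similarity-based analogical proportion $a:b\approx_{(\mathfrak A,\mathfrak B)}c:d$ holds iff $a\to b\approx_{(\mathfrak A,\mathfrak B)}c\to d$ and $b\to a\approx_{(\mathfrak A,\mathfrak B)}d\to c$. We write $\approx_{\mathfrak A}$ for $\approx_{(\mathfrak A,\mathfrak A)}$. *)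

theory Defs
  imports Main
begin

datatype 'f trm = Var nat | Fn 'f "'f trm list"

type_synonym 'f language = "'f set \<times> ('f \<Rightarrow> nat)"

fun wf_trm :: "'f language \<Rightarrow> 'f trm \<Rightarrow> bool" where
  "wf_trm L (Var x) = True"
| "wf_trm L (Fn f ts) = (f \<in> fst L \<and> length ts = snd L f \<and> (\<forall>t\<in>set ts. wf_trm L t))"

fun vars :: "'f trm \<Rightarrow> nat set" where
  "vars (Var x) = {x}"
| "vars (Fn f ts) = (\<Union>t\<in>set ts. vars t)"

type_synonym ('f,'a) alg = "'a set \<times> ('f \<Rightarrow> 'a list \<Rightarrow> 'a)"

definition is_algebra :: "'f language \<Rightarrow> ('f,'a) alg \<Rightarrow> bool" where
  "is_algebra L \<A> \<longleftrightarrow> fst \<A> \<noteq> {} \<and>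
     (\<forall>f\<in>fst L. \<forall>xs. length xs = snd L f \<and> set xs \<subseteq> fst \<A> \<longrightarrow> snd \<A> f xs \<in> fst \<A>)"

fun eval :: "('f \<Rightarrow> 'a list \<Rightarrow> 'a) \<Rightarrow> (nat \<Rightarrow> 'a) \<Rightarrow> 'f trm \<Rightarrow> 'a" where
  "eval I \<sigma> (Var x) = \<sigma> x"
| "eval I \<sigma> (Fn f ts) = I f (map (eval I \<sigma>) ts)"

definition gens :: "'f language \<Rightarrow> ('f,'a) alg \<Rightarrow> 'a \<Rightarrow> 'a \<Rightarrow> ('f trm \<times> 'f trm) set" where
  "gens L \<A> a b = {(s,t). wf_trm L s \<and> wf_trm L t \<and>
     (\<exists>\<sigma>. (\<forall>x\<in>vars s \<union> vars t. \<sigma> x \<in> fst \<A>) \<and>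
          eval (snd \<A>) \<sigma> s = a \<and> eval (snd \<A>) \<sigma> t = b)}"

definition gens2 :: "'f language \<Rightarrow> ('f,'a) alg \<Rightarrow> ('f,'b) alg \<Rightarrow> 'a \<Rightarrow> 'a \<Rightarrow> 'b \<Rightarrow> 'b
    \<Rightarrow> ('f trm \<times> 'f trm) set" where
  "gens2 L \<A> \<B> a b c d = gens L \<A> a b \<inter> gens L \<B> c d"

definition trivial :: "'f language \<Rightarrow> ('f,'a) alg \<Rightarrow> ('f,'b) alg \<Rightarrow> ('f trm \<times> 'f trm) \<Rightarrow> bool" where
  "trivial L \<A> \<B> p \<longleftrightarrow>
     (\<forall>e\<in>fst \<A> \<times> fst \<A>. p \<in> gens L \<A> (fst e) (snd e)) \<and>
     (\<forall>e\<in>fst \<B> \<times> fst \<B>. p \<in> gens L \<B> (fst e) (snd e))"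

definition lesssim :: "'f language \<Rightarrow> ('f,'a) alg \<Rightarrow> ('f,'b) alg \<Rightarrow> 'a \<Rightarrow> 'a \<Rightarrow> 'b \<Rightarrow> 'b \<Rightarrow> bool" where
  "lesssim L \<A> \<B> a b c d \<longleftrightarrow>
     (\<forall>p\<in>gens L \<A> a b \<union> gens L \<B> c d. trivial L \<A> \<B> p) \<or>
     ((\<exists>p\<in>gens2 L \<A> \<B> a b c d. \<not> trivial L \<A> \<B> p) \<and>
      (\<forall>c'\<in>fst \<B>. \<forall>d'\<in>fst \<B>. gens2 L \<A> \<B> a b c d \<subseteq> gens2 L \<A> \<B> a b c' d'
          \<longrightarrow> gens2 L \<A> \<B> a b c d = gens2 L \<A> \<B> a b c' d'))"

definition arrow_approx :: "'f language \<Rightarrow> ('f,'a) alg \<Rightarrow> ('f,'b) alg \<Rightarrow> 'a \<Rightarrow> 'a \<Rightarrow> 'b \<Rightarrow> 'b \<Rightarrow> bool" where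
  "arrow_approx L \<A> \<B> a b c d \<longleftrightarrow> lesssim L \<A> \<B> a b c d \<and> lesssim L \<B> \<A> c d a b"

definition analogy :: "'f language \<Rightarrow> ('f,'a) alg \<Rightarrow> ('f,'b) alg \<Rightarrow> 'a \<Rightarrow> 'a \<Rightarrow> 'b \<Rightarrow> 'b \<Rightarrow> bool" where
  "analogy L \<A> \<B> a b c d \<longleftrightarrow> arrow_approx L \<A> \<B> a b c d \<and> arrow_approx L \<A> \<B> b a d c"

end

theory Submission
  imports Defs
begin

text \<open>Take one constant symbol \<open>c\<close>, interpreted as \<open>0\<close> in the universe \<open>{0, 1}\<close>. The pair
  \<open>c \<rightarrow> x\<close> generalizes \<open>0 \<rightarrow> 1\<close> but not \<open>1 \<rightarrow> 0\<close>, so it is not trivial. On the other hand a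
  term taking the value \<open>1\<close> must be a variable, so every common generalization of \<open>0 \<rightarrow> 1\<close> and
  \<open>1 \<rightarrow> 0\<close> is a pair of distinct variables, which is trivial. Thus neither clause of
  \<open>0 \<rightarrow> 1 \<lesssim> 1 \<rightarrow> 0\<close> holds, and \<open>0 : 1 \<approx> 1 : 0\<close> fails.\<close>

definition constant_language :: "nat language" where
  "constant_language = ({0}, \<lambda>_. 0)"

definition zero_algebra :: "(nat, nat) alg" where
  "zero_algebra = ({0, 1}, \<lambda>_ _. 0)"

lemma is_algebra_zero_algebra: "is_algebra constant_language zero_algebra"
  unfolding is_algebra_def constant_language_def zero_algebra_def by auto

lemma eval_const_interp_neq_is_Var:
  assumes "eval (\<lambda>_ _. c) \<sigma> s \<noteq> c"
  shows "\<exists>x. s = Var x"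
  using assms by (cases s) auto

lemma distinct_Vars_in_gens:
  assumes "x \<noteq> y" "a \<in> fst \<A>" "b \<in> fst \<A>"
  shows "(Var x, Var y) \<in> gens L \<A> a b"
  unfolding gens_def using assms
  by (auto intro!: exI[of _ "\<lambda>z. if z = x then a else b"])

lemma trivial_distinct_Vars:
  assumes "x \<noteq> y"
  shows "trivial L \<A> \<B> (Var x, Var y)"
  unfolding trivial_def by (auto intro: distinct_Vars_in_gens[OF assms])

lemma common_gens_swap_trivial:
  assumes "p \<in> gens2 constant_language zero_algebra zero_algebra 0 1 1 0"
  shows "trivial constant_language zero_algebra zero_algebra p"
proof -
  obtain s t where p: "p = (s, t)"
    by (cases p)
  obtain \<sigma> \<tau> :: "nat \<Rightarrow> nat"
    where \<sigma>: "eval (\<lambda>_ _. 0) \<sigma> s = 0" "eval (\<lambda>_ _. 0) \<sigma> t = 1"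
      and \<tau>: "eval (\<lambda>_ _. 0) \<tau> s = 1" "eval (\<lambda>_ _. 0) \<tau> t = 0"
    using assms unfolding p gens2_def gens_def zero_algebra_def by auto
  obtain x where x: "s = Var x"
    using eval_const_interp_neq_is_Var[of 0 \<tau> s] \<tau> by auto
  obtain y where y: "t = Var y"
    using eval_const_interp_neq_is_Var[of 0 \<sigma> t] \<sigma> by auto
  have "x \<noteq> y"
    using x y \<sigma> by auto
  then show ?thesis
    unfolding p x y by (rule trivial_distinct_Vars)
qed

lemma not_lesssim_swap: "\<not> lesssim constant_language zero_algebra zero_algebra 0 1 1 0"
proof -
  let ?c = "(Fn 0 [], Var 0) :: nat trm \<times> nat trm"
  have "?c \<in> gens constant_language zero_algebra 0 1"
    unfolding gens_def constant_language_def zero_algebra_def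
    by (auto intro!: exI[of _ "\<lambda>_. 1"])
  moreover have "\<not> trivial constant_language zero_algebra zero_algebra ?c"
    unfolding trivial_def gens_def zero_algebra_def by auto
  ultimately show ?thesis
    unfolding lesssim_def using common_gens_swap_trivial by blast
qed

theorem theorem3:
  shows "\<exists>(L :: nat language) (\<A> :: (nat, nat) alg) a b.
           is_algebra L \<A> \<and> a \<in> fst \<A> \<and> b \<in> fst \<A> \<and> \<not> analogy L \<A> \<A> a b b a"
proof -
  have "\<not> analogy constant_language zero_algebra zero_algebra 0 1 1 0"
    using not_lesssim_swap unfolding analogy_def arrow_approx_def by blast
  moreover have "0 \<in> fst zero_algebra" "1 \<in> fst zero_algebra"
    by (auto simp: zero_algebra_def)
  ultimately show ?thesis
    using is_algebra_zero_algebra by blast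
qed

end
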